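(* Let $Q$ be a conjunctive query without self-joins and $A$ a universal attribute of $Q$. Then $Q$ contains a hard structure if and only if $Q_{-A}$ contains a hard structure, where $Q_{-A}$ is obtained by removing $A$ from every relation of $Q$ and from its head.
   Context: CQ $Q(\mathbf{A}) :- R_1(\mathbb{A}_1),\dots,R_p(\mathbb{A}_p)$ with distinct relation symbols, $\mathrm{attr}(R_i)=\mathbb{A}_i$, $\mathrm{attr}(Q)=\bigcup_i\mathbb{A}_i$, $\mathrm{head}(Q)=\mathbf{A}$. An attribute is universal if it is in $\mathrm{head}(Q)$ and in every $\mathbb{A}_i$. Standing assumption: distinct relations have distinct attribute sets. $R_j$ is exogenous if another relation $R_i$ has $\mathrm{attr}(R_i)\subsetneq\mathrm{attr}(R_j)$, endogenous otherwise. A path between relations $R_i,R_j$ using only attributes in a set $S$ is a sequence of relations from $R_i$ to $R_j$ in which consecutive relations share an attribute of $S$. Triad-like structure: three endogenous relations such that for each pair there is a path between them using only attributes in $\mathrm{attr}(Q)\setminus(\mathrm{head}(Q)\cup\mathrm{attr}(R))$, $R$ the third relation. $R_j$ is dominated by $R_i$ if (1) $\mathrm{attr}(R_i)\subseteq\mathrm{attr}(R_j)$; (2) for every $R_k$ with $\mathrm{attr}(R_i)\setminus\mathrm{attr}(R_k)\ne\emptyset$, $\mathrm{attr}(R_j)\cap\mathrm{attr}(R_k)\subseteq\mathrm{attr}(R_i)\cap\mathrm{head}(Q)$; (3) $\mathrm{attr}(R_i)\subseteq\mathrm{head}(Q)$ or $\mathrm{head}(Q)\subseteq\mathrm{attr}(R_i)$;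 non-dominated relations are those dominated by no other relation. Strand: two non-dominated relations $R_i,R_j$ with $\mathrm{head}(Q)\cap\mathrm{attr}(R_i)\ne\mathrm{head}(Q)\cap\mathrm{attr}(R_j)$ and $(\mathrm{attr}(R_i)\cap\mathrm{attr}(R_j))\setminus\mathrm{head}(Q)\ne\emptyset$. The head join of non-dominated relations is the full query formed by the non-dominated relations restricted to $\mathrm{head}(Q)$; a full query is hierarchical if for all attributes $A,B$ the sets of relations containing them are nested or disjoint. $Q$ contains a hard structure if it contains a triad-like structure or a strand, or the head join of its non-dominated relations is non-hierarchical. *)

theory Defs
  imports Main
begin

text \<open>A self-join-free conjunctive query is represented by a set I of relation
symbols, a map att giving each relation symbol its attribute set, and the
head attribute set H.  attr(Q) is the union of all attribute sets.\<close>

definition cq_wf :: "'r set \<Rightarrow> ('r \<Rightarrow> 'a set) \<Rightarrow> 'a set \<Rightarrow> bool" where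
  "cq_wf I att H \<longleftrightarrow> finite I \<and> I \<noteq> {} \<and> (\<forall>i\<in>I. finite (att i))
     \<and> inj_on att I \<and> H \<subseteq> (\<Union>i\<in>I. att i)"

definition attrQ :: "'r set \<Rightarrow> ('r \<Rightarrow> 'a set) \<Rightarrow> 'a set" where
  "attrQ I att = (\<Union>i\<in>I. att i)"

definition universal :: "'r set \<Rightarrow> ('r \<Rightarrow> 'a set) \<Rightarrow> 'a set \<Rightarrow> 'a \<Rightarrow> bool" where
  "universal I att H A \<longleftrightarrow> A \<in> H \<and> (\<forall>i\<in>I. A \<in> att i)"

definition exogenous :: "'r set \<Rightarrow> ('r \<Rightarrow> 'a set) \<Rightarrow> 'r \<Rightarrow> bool" where
  "exogenous I att j \<longleftrightarrow> (\<exists>i\<in>I. att i \<subset> att j)"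

definition endogenous :: "'r set \<Rightarrow> ('r \<Rightarrow> 'a set) \<Rightarrow> 'r \<Rightarrow> bool" where
  "endogenous I att j \<longleftrightarrow> j \<in> I \<and> \<not> exogenous I att j"

definition cq_path :: "'r set \<Rightarrow> ('r \<Rightarrow> 'a set) \<Rightarrow> 'a set \<Rightarrow> 'r \<Rightarrow> 'r \<Rightarrow> bool" where
  "cq_path I att S i j \<longleftrightarrow> (\<exists>xs. xs \<noteq> [] \<and> hd xs = i \<and> last xs = j \<and> set xs \<subseteq> I \<and>
      (\<forall>k. Suc k < length xs \<longrightarrow> att (xs ! k) \<inter> att (xs ! Suc k) \<inter> S \<noteq> {}))"

definition triad_like :: "'r set \<Rightarrow> ('r \<Rightarrow> 'a set) \<Rightarrow> 'a set \<Rightarrow> bool" where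
  "triad_like I att H \<longleftrightarrow> (\<exists>r1 r2 r3.
     r1 \<noteq> r2 \<and> r2 \<noteq> r3 \<and> r1 \<noteq> r3 \<and>
     endogenous I att r1 \<and> endogenous I att r2 \<and> endogenous I att r3 \<and>
     cq_path I att (attrQ I att - (H \<union> att r3)) r1 r2 \<and>
     cq_path I att (attrQ I att - (H \<union> att r1)) r2 r3 \<and>
     cq_path I att (attrQ I att - (H \<union> att r2)) r1 r3)"

definition dominated_by :: "'r set \<Rightarrow> ('r \<Rightarrow> 'a set) \<Rightarrow> 'a set \<Rightarrow> 'r \<Rightarrow> 'r \<Rightarrow> bool" where
  "dominated_by I att H j i \<longleftrightarrow> i \<in> I \<and> j \<in> I \<and> i \<noteq> j \<and>
     att i \<subseteq> att j \<and>
     (\<forall>k\<in>I. att i - att k \<noteq> {} \<longrightarrow> att j \<inter> att k \<subseteq> att i \<inter> H) \<and>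
     (att i \<subseteq> H \<or> H \<subseteq> att i)"

definition non_dominated :: "'r set \<Rightarrow> ('r \<Rightarrow> 'a set) \<Rightarrow> 'a set \<Rightarrow> 'r \<Rightarrow> bool" where
  "non_dominated I att H j \<longleftrightarrow> j \<in> I \<and> \<not> (\<exists>i\<in>I. dominated_by I att H j i)"

definition strand :: "'r set \<Rightarrow> ('r \<Rightarrow> 'a set) \<Rightarrow> 'a set \<Rightarrow> bool" where
  "strand I att H \<longleftrightarrow> (\<exists>i j. non_dominated I att H i \<and> non_dominated I att H j \<and>
     H \<inter> att i \<noteq> H \<inter> att j \<and> (att i \<inter> att j) - H \<noteq> {})"

definition hierarchical :: "'r set \<Rightarrow> ('r \<Rightarrow> 'a set) \<Rightarrow> bool" where
  "hierarchical J att \<longleftrightarrow> (\<forall>X Y.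
     let RX = {i\<in>J. X \<in> att i}; RY = {i\<in>J. Y \<in> att i}
     in RX \<subseteq> RY \<or> RY \<subseteq> RX \<or> RX \<inter> RY = {})"

definition head_join_hierarchical :: "'r set \<Rightarrow> ('r \<Rightarrow> 'a set) \<Rightarrow> 'a set \<Rightarrow> bool" where
  "head_join_hierarchical I att H \<longleftrightarrow>
     hierarchical {j. non_dominated I att H j} (\<lambda>j. att j \<inter> H)"

definition hard_structure :: "'r set \<Rightarrow> ('r \<Rightarrow> 'a set) \<Rightarrow> 'a set \<Rightarrow> bool" where
  "hard_structure I att H \<longleftrightarrow>
     triad_like I att H \<or> strand I att H \<or> \<not> head_join_hierarchical I att H"

definition remove_attr :: "('r \<Rightarrow> 'a set) \<Rightarrow> 'a \<Rightarrow> 'r \<Rightarrow> 'a set" where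
  "remove_attr att A = (\<lambda>i. att i - {A})"

end

theory Submission
  imports Defs
begin

text \<open>A universal attribute A lies in every relation and in the head, so deleting it
changes none of the inclusions between attribute sets that define exogeneity and
domination, nor the comparisons of head parts in a strand.  Triad paths and strands
only use non-head attributes, which never include A.  In the head join, A occurs in
every relation, and such an attribute is nested with every other one, so it neither
creates nor destroys a violation of hierarchy.\<close>

lemma exogenous_remove_attr:
  assumes "\<forall>i\<in>I. A \<in> att i" and "j \<in> I"
  shows "exogenous I (remove_attr att A) j \<longleftrightarrow> exogenous I att j"
  using assms unfolding exogenous_def remove_attr_def by blast

lemma endogenous_remove_attr:
  assumes "\<forall>i\<in>I. A \<in> att i"
  shows "endogenous I (remove_attr att A) j \<longleftrightarrow> endogenous I att j"
  using exogenous_remove_attr[OF assms] unfolding endogenous_def by blast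

lemma cq_path_remove_attr:
  assumes "A \<notin> S"
  shows "cq_path I (remove_attr att A) S i j \<longleftrightarrow> cq_path I att S i j"
proof -
  have "remove_attr att A u \<inter> remove_attr att A v \<inter> S = att u \<inter> att v \<inter> S" for u v
    using assms unfolding remove_attr_def by blast
  then show ?thesis unfolding cq_path_def by simp
qed

lemma non_head_attrs_remove_attr:
  assumes "A \<in> H"
  shows "attrQ I (remove_attr att A) - ((H - {A}) \<union> remove_attr att A r) = attrQ I att - (H \<union> att r)"
  using assms unfolding attrQ_def remove_attr_def by auto

lemma triad_like_remove_attr:
  assumes "\<forall>i\<in>I. A \<in> att i" and "A \<in> H"
  shows "triad_like I (remove_attr att A) (H - {A}) \<longleftrightarrow> triad_like I att H"
proof -
  have "A \<notin> attrQ I att - (H \<union> att r)" for r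
    using assms(2) by blast
  then show ?thesis
    unfolding triad_like_def non_head_attrs_remove_attr[OF assms(2)]
    by (simp add: endogenous_remove_attr[OF assms(1)] cq_path_remove_attr)
qed

lemma dominated_by_remove_attr:
  assumes "\<forall>i\<in>I. A \<in> att i" and "A \<in> H"
  shows "dominated_by I (remove_attr att A) (H - {A}) j i \<longleftrightarrow> dominated_by I att H j i"
proof (cases "i \<in> I \<and> j \<in> I")
  case True
  then have "A \<in> att i" "A \<in> att j"
    using assms(1) by auto
  moreover have "att i - {A} - (att k - {A}) = att i - att k" if "k \<in> I" for k
    using that assms(1) by blast
  ultimately show ?thesis
    using assms(2) unfolding dominated_by_def remove_attr_def
    by (intro conj_cong ball_cong refl) (simp_all, blast+)
next
  case False
  then show ?thesis
    unfolding dominated_by_def by blast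
qed

lemma non_dominated_remove_attr:
  assumes "\<forall>i\<in>I. A \<in> att i" and "A \<in> H"
  shows "non_dominated I (remove_attr att A) (H - {A}) j \<longleftrightarrow> non_dominated I att H j"
  unfolding non_dominated_def dominated_by_remove_attr[OF assms] ..

lemma strand_remove_attr:
  assumes "\<forall>i\<in>I. A \<in> att i" and "A \<in> H"
  shows "strand I (remove_attr att A) (H - {A}) \<longleftrightarrow> strand I att H"
proof -
  have "(H - {A}) \<inter> remove_attr att A i \<noteq> (H - {A}) \<inter> remove_attr att A j
      \<and> (remove_attr att A i \<inter> remove_attr att A j) - (H - {A}) \<noteq> {}
    \<longleftrightarrow> H \<inter> att i \<noteq> H \<inter> att j \<and> (att i \<inter> att j) - H \<noteq> {}"
    if "i \<in> I" "j \<in> I" for i j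
    using that assms unfolding remove_attr_def by blast
  moreover have "non_dominated I att H i \<Longrightarrow> i \<in> I" for i
    unfolding non_dominated_def by blast
  ultimately show ?thesis
    unfolding strand_def non_dominated_remove_attr[OF assms] by meson
qed

definition nested_or_disjoint :: "'a set \<Rightarrow> 'a set \<Rightarrow> bool" where
  "nested_or_disjoint P Q \<longleftrightarrow> P \<subseteq> Q \<or> Q \<subseteq> P \<or> P \<inter> Q = {}"

lemma hierarchical_iff_nested_or_disjoint:
  "hierarchical J f \<longleftrightarrow> (\<forall>X Y. nested_or_disjoint {j\<in>J. X \<in> f j} {j\<in>J. Y \<in> f j})"
  unfolding hierarchical_def nested_or_disjoint_def Let_def ..

lemma hierarchical_Diff_universal:
  assumes "\<forall>j\<in>J. A \<in> f j"
  shows "hierarchical J (\<lambda>j. f j - {A}) \<longleftrightarrow> hierarchical J f"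
proof -
  let ?R = "\<lambda>X. {j\<in>J. X \<in> f j}"
  have minus: "{j\<in>J. X \<in> f j - {A}} = (if X = A then {} else ?R X)" for X
    by auto
  have universal: "nested_or_disjoint (?R X) (?R A)" "nested_or_disjoint (?R A) (?R X)" for X
    using assms unfolding nested_or_disjoint_def by blast+
  have empty: "nested_or_disjoint {} P" "nested_or_disjoint P {}" for P :: "'a set"
    unfolding nested_or_disjoint_def by blast+
  show ?thesis
    unfolding hierarchical_iff_nested_or_disjoint minus
  proof (intro iffI allI)
    fix X Y
    assume "\<forall>X Y. nested_or_disjoint (if X = A then {} else ?R X) (if Y = A then {} else ?R Y)"
    from this[rule_format, of X Y] show "nested_or_disjoint (?R X) (?R Y)"
      using universal by (cases "X = A"; cases "Y = A") simp_all
  next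
    fix X Y
    assume "\<forall>X Y. nested_or_disjoint (?R X) (?R Y)"
    then show "nested_or_disjoint (if X = A then {} else ?R X) (if Y = A then {} else ?R Y)"
      using empty by simp
  qed
qed

lemma head_join_hierarchical_remove_attr:
  assumes "\<forall>i\<in>I. A \<in> att i" and "A \<in> H"
  shows "head_join_hierarchical I (remove_attr att A) (H - {A}) \<longleftrightarrow> head_join_hierarchical I att H"
proof -
  have "(\<lambda>j. remove_attr att A j \<inter> (H - {A})) = (\<lambda>j. att j \<inter> H - {A})"
    unfolding remove_attr_def by blast
  moreover have "\<forall>j\<in>{j. non_dominated I att H j}. A \<in> att j \<inter> H"
    using assms unfolding non_dominated_def by blast
  ultimately show ?thesis
    unfolding head_join_hierarchical_def non_dominated_remove_attr[OF assms]
    by (simp add: hierarchical_Diff_universal)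
qed

theorem lemma8:
  fixes I :: "'r set" and att :: "'r \<Rightarrow> 'a set" and H :: "'a set" and A :: 'a
  assumes "cq_wf I att H"
    and "universal I att H A"
  shows "hard_structure I att H \<longleftrightarrow> hard_structure I (remove_attr att A) (H - {A})"
proof -
  from assms(2) have in_all: "\<forall>i\<in>I. A \<in> att i" and in_head: "A \<in> H"
    unfolding universal_def by auto
  show ?thesis
    unfolding hard_structure_def triad_like_remove_attr[OF in_all in_head]
      strand_remove_attr[OF in_all in_head] head_join_hierarchical_remove_attr[OF in_all in_head] ..
qed

end
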